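(* Let $I$ be a compact metric space, $\mu$ a non-negative finite Borel measure on $I$, $N\ge2$, $N'\le N$ natural numbers, and $s$ a surplus function satisfying Assumptions (A1) and (A2). Then the function $\hat s$ on $I^{N!}/\sim_{N!}$ is upper semi-continuous, and there is a lower semi-continuous function $\hat a\in L^1(I,\mu)$ such that $\hat s([i_1,\dots,i_{N!}])\le\sum_{k=1}^{N!}\hat a(i_k)$ for all $i_1,\dots,i_{N!}\in I$.
   Context: For $n\in\mathbb{N}$, $I^n/\sim_n$ is the quotient of $I^n$ by permutation of coordinates (quotient topology), the class of $(i_1,\dots,i_n)$ written $[i_1,\dots,i_n]$; $\mathcal{G}_n=I^n/\sim_n$ is the set of $n$-person groups and $\mathcal{G}=\bigcup_{n=N'}^N\mathcal{G}_n$. A surplus function is $s:\mathcal{G}\to[0,\infty)$, $s_n=s|_{\mathcal{G}_n}$. (A1): each $s_n$, $N'\le n\le N$, is continuous on $\mathcal{G}_n$. (A2): for each $N'\le n\le N$ there is a real-valued lower semi-continuous $a_n$ on $I$ with $s_n([i_1,\dots,i_n])\le\sum_{k=1}^na_n(i_k)$ for all $i_1,\dots,i_n$. For $N'\le n\le N$, $K_n\subset I^{N!}/\sim_{N!}$ is the set of classes $[i_1,\dots,i_{N!}]$ such that for every $i\in I$, $|\{k:i_k=i\}|$ is divisible by $N!/n$; $P_n:K_n\to\mathcal{G}_n$ sends $[\underbrace{j_1,\dots,j_1}_{N!/n},\dots,\underbrace{j_n,\dots,j_n}_{N!/n}]$ to $[j_1,\dots,j_n]$. Define $\hat s_n=s_n\circ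 P_n$ on $K_n$ and $\hat s_n=0$ off $K_n$, and $\hat s=\max_{N'\le n\le N}\frac{N}{n}\hat s_n$ on $I^{N!}/\sim_{N!}$. *)

theory Defs
  imports "HOL-Analysis.Analysis" "HOL-Probability.Probability" "HOL-Library.Multiset"
begin

definition quotient_topology :: "'a topology \<Rightarrow> ('a \<Rightarrow> 'b) \<Rightarrow> 'b topology" where
  "quotient_topology X q =
     topology (\<lambda>U. U \<subseteq> q ` topspace X \<and> openin X {x \<in> topspace X. q x \<in> U})"

text \<open>Class [i_1,...,i_n] of a tuple x in I^n (tuples = extensional functions on {..<n}).\<close>
definition group_of :: "nat \<Rightarrow> (nat \<Rightarrow> 'a) \<Rightarrow> 'a multiset" where
  "group_of n x = image_mset x (mset_set {..<n})"

definition groups_top :: "'a::metric_space set \<Rightarrow> nat \<Rightarrow> 'a multiset topology" where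
  "groups_top I n = quotient_topology (product_topology (\<lambda>_. top_of_set I) {..<n}) (group_of n)"

definition usc_map :: "'a topology \<Rightarrow> ('a \<Rightarrow> real) \<Rightarrow> bool" where
  "usc_map X f \<longleftrightarrow> (\<forall>t. openin X {x \<in> topspace X. f x < t})"

definition lsc_map :: "'a topology \<Rightarrow> ('a \<Rightarrow> real) \<Rightarrow> bool" where
  "lsc_map X f \<longleftrightarrow> (\<forall>t. openin X {x \<in> topspace X. f x > t})"

definition in_K :: "nat \<Rightarrow> nat \<Rightarrow> 'a multiset \<Rightarrow> bool" where
  "in_K N n M \<longleftrightarrow> (\<forall>i. (fact N div n) dvd count M i)"

definition P_map :: "nat \<Rightarrow> nat \<Rightarrow> 'a multiset \<Rightarrow> 'a multiset" where
  "P_map N n M = (\<Sum>i\<in>set_mset M. replicate_mset (count M i div (fact N div n)) i)"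

definition s_hat_n :: "('a multiset \<Rightarrow> real) \<Rightarrow> nat \<Rightarrow> nat \<Rightarrow> 'a multiset \<Rightarrow> real" where
  "s_hat_n s N n M = (if in_K N n M then s (P_map N n M) else 0)"

definition s_hat :: "('a multiset \<Rightarrow> real) \<Rightarrow> nat \<Rightarrow> nat \<Rightarrow> 'a multiset \<Rightarrow> real" where
  "s_hat s N' N M = Max ((\<lambda>n. real N / real n * s_hat_n s N n M) ` {N'..N})"

end

theory Submission imports Defs
begin

text \<open>Since \<open>s_hat\<close> is a finite maximum of nonnegative multiples of the \<open>s_hat_n\<close>, it is upper
  semicontinuous once every superlevel set \<open>{s_hat_n \<ge> t}\<close>, \<open>t > 0\<close>, is closed. Such a set is the
  image of the closed set \<open>{s \<ge> t}\<close> of \<open>n\<close>-person groups under the replication map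
  \<open>M \<mapsto> (N!/n) \<cdot> M\<close>, and replication is a closed map: lifted to tuples, the preimage of a
  replicated closed set is the union, over all permutations of the \<open>N!\<close> coordinates, of
  continuous images of a compact set, hence compact and closed in the Hausdorff space \<open>I\<^sup>N\<^sup>!\<close>.

  For the bound, a constant suffices: being upper semicontinuous on the compact space of
  \<open>N!\<close>-person groups, \<open>s_hat\<close> is bounded above.\<close>

subsection \<open>Semicontinuity\<close>

lemma usc_map_iff_closedin: "usc_map X f \<longleftrightarrow> (\<forall>t. closedin X {x \<in> topspace X. t \<le> f x})"
  unfolding usc_map_def closedin_def by (simp add: Diff_eq Compl_eq not_le Int_Collect_imp_eq)

lemma usc_map_cmult:
  assumes "0 \<le> c" "usc_map X f"
  shows "usc_map X (\<lambda>x. c * f x)"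
  unfolding usc_map_def
proof
  fix t
  show "openin X {x \<in> topspace X. c * f x < t}"
  proof (cases "c = 0")
    case True
    then show ?thesis by (cases "0 < t") auto
  next
    case False
    then have "{x \<in> topspace X. c * f x < t} = {x \<in> topspace X. f x < t / c}"
      using assms(1) by (auto simp: field_simps)
    then show ?thesis using assms(2) by (simp add: usc_map_def)
  qed
qed

lemma usc_map_Max:
  assumes "finite A" "A \<noteq> {}" "\<And>i. i \<in> A \<Longrightarrow> usc_map X (f i)"
  shows "usc_map X (\<lambda>x. Max ((\<lambda>i. f i x) ` A))"
  unfolding usc_map_def
proof
  fix t
  have "{x \<in> topspace X. Max ((\<lambda>i. f i x) ` A) < t} = (\<Inter>i\<in>A. {x \<in> topspace X. f i x < t})"
    using assms(1,2) by auto
  then show "openin X {x \<in> topspace X. Max ((\<lambda>i. f i x) ` A) < t}"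
    using assms by (auto simp: usc_map_def)
qed

text \<open>The sets where \<open>f < k\<close>, \<open>k \<in> \<nat>\<close>, form an open cover.\<close>
lemma usc_map_bounded_above:
  assumes "compact_space X" "usc_map X f"
  obtains B where "\<And>x. x \<in> topspace X \<Longrightarrow> f x \<le> B"
proof -
  define U where "U k = {x \<in> topspace X. f x < real k}" for k :: nat
  have "topspace X \<subseteq> \<Union>(range U)"
    unfolding U_def using reals_Archimedean2 by blast
  moreover have "\<forall>V\<in>range U. openin X V"
    using assms(2) unfolding U_def usc_map_def by blast
  ultimately obtain F where F: "finite F" "F \<subseteq> range U" "topspace X \<subseteq> \<Union>F"
    using assms(1) unfolding compact_space_def compactin_def by (metis order_refl)
  then obtain K where K: "finite K" "topspace X \<subseteq> (\<Union>k\<in>K. U k)"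
    by (metis finite_subset_image)
  show thesis
  proof
    fix x assume "x \<in> topspace X"
    then obtain k where "k \<in> K" "f x < real k" using K(2) unfolding U_def by blast
    moreover have "real k \<le> real (Max K)" using Max_ge[OF K(1) \<open>k \<in> K\<close>] by simp
    ultimately show "f x \<le> real (Max K)" by linarith
  qed
qed

lemma lsc_map_const: "lsc_map X (\<lambda>_. c)"
  unfolding lsc_map_def
proof
  fix t
  show "openin X {x \<in> topspace X. t < c}" by (cases "t < c") auto
qed

subsection \<open>Groups as multisets\<close>

lemma group_of_eq_mset_map: "group_of m x = mset (map x [0..<m])"
  by (simp add: group_of_def atLeast0LessThan)

lemma group_of_cong: "(\<And>k. k < m \<Longrightarrow> x k = y k) \<Longrightarrow> group_of m x = group_of m y"
  unfolding group_of_def by (intro image_mset_cong) auto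

lemma group_of_replicate: "group_of (n * d) (\<lambda>k. z (k div d)) = repeat_mset d (group_of n z)"
proof (induction n)
  case 0
  then show ?case by (simp add: group_of_def)
next
  case (Suc n)
  have "[0..<Suc n * d] = [0..<n * d] @ [n * d..<n * d + d]"
    by (metis add.commute le_add2 mult_Suc upt_add_eq_append zero_le)
  moreover have "map (\<lambda>k. z (k div d)) [n * d..<n * d + d] = replicate d (z n)"
  proof (rule nth_equalityI)
    fix i assume "i < length (map (\<lambda>k. z (k div d)) [n * d..<n * d + d])"
    then have "i < d" by simp
    then have "(n * d + i) div d = n" by simp
    then show "map (\<lambda>k. z (k div d)) [n * d..<n * d + d] ! i = replicate d (z n) ! i"
      using \<open>i < d\<close> by (simp add: add.commute)
  qed simp
  ultimately have "group_of (Suc n * d) (\<lambda>k. z (k div d)) =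
      group_of (n * d) (\<lambda>k. z (k div d)) + replicate_mset d (z n)"
    by (simp add: group_of_eq_mset_map)
  also have "\<dots> = repeat_mset d (group_of (Suc n) z)"
    using Suc by (simp add: group_of_eq_mset_map multiset_eq_iff algebra_simps)
  finally show ?case .
qed

lemma group_of_permute:
  assumes "\<sigma> permutes {..<m}"
  shows "group_of m (\<lambda>k. x (\<sigma> k)) = group_of m x"
proof -
  have "group_of m (\<lambda>k. x (\<sigma> k)) = image_mset x (image_mset \<sigma> (mset_set {..<m}))"
    by (simp add: group_of_def multiset.map_comp comp_def)
  also have "image_mset \<sigma> (mset_set {..<m}) = mset_set {..<m}"
    using assms by (simp add: image_mset_mset_set permutes_inj_on permutes_image)
  finally show ?thesis by (simp add: group_of_def)
qed

lemma group_of_eq_imp_permutes: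
  assumes "group_of m x = group_of m y"
  obtains \<sigma> where "\<sigma> permutes {..<m}" "\<And>k. k < m \<Longrightarrow> x k = y (\<sigma> k)"
proof -
  from assms have "mset (map y [0..<m]) = mset (map x [0..<m])"
    by (simp add: group_of_eq_mset_map)
  then obtain p where p: "p permutes {..<m}" "permute_list p (map y [0..<m]) = map x [0..<m]"
    by (metis mset_eq_permutation length_map length_upt minus_nat.diff_0)
  have xp: "x k = y (p k)" if "k < m" for k
  proof -
    have "p k < m" using that p(1) permutes_in_image by fastforce
    then show ?thesis
      using arg_cong[OF p(2), of "\<lambda>xs. xs ! k"] that p(1) by (simp add: permute_list_nth)
  qed
  show thesis by (rule that[OF p(1) xp])
qed

definition replicate_tuple :: "nat \<Rightarrow> nat \<Rightarrow> (nat \<Rightarrow> nat) \<Rightarrow> (nat \<Rightarrow> 'a) \<Rightarrow> nat \<Rightarrow> 'a" where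
  "replicate_tuple m d \<sigma> z = restrict (\<lambda>k. z (\<sigma> k div d)) {..<m}"

lemma group_of_eq_repeat_mset_iff:
  assumes "x \<in> extensional {..<n * d}"
  shows "group_of (n * d) x = repeat_mset d (group_of n z) \<longleftrightarrow>
    (\<exists>\<sigma>. \<sigma> permutes {..<n * d} \<and> x = replicate_tuple (n * d) d \<sigma> z)"
proof
  assume "group_of (n * d) x = repeat_mset d (group_of n z)"
  then have "group_of (n * d) x = group_of (n * d) (\<lambda>k. z (k div d))"
    by (simp add: group_of_replicate)
  then obtain \<sigma> where \<sigma>: "\<sigma> permutes {..<n * d}" "\<And>k. k < n * d \<Longrightarrow> x k = z (\<sigma> k div d)"
    by (rule group_of_eq_imp_permutes) blast
  have "x = replicate_tuple (n * d) d \<sigma> z"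
    using assms \<sigma>(2) by (auto simp: extensional_def replicate_tuple_def)
  then show "\<exists>\<sigma>. \<sigma> permutes {..<n * d} \<and> x = replicate_tuple (n * d) d \<sigma> z"
    using \<sigma>(1) by blast
next
  assume "\<exists>\<sigma>. \<sigma> permutes {..<n * d} \<and> x = replicate_tuple (n * d) d \<sigma> z"
  then obtain \<sigma> where \<sigma>: "\<sigma> permutes {..<n * d}" "x = replicate_tuple (n * d) d \<sigma> z"
    by blast
  have "group_of (n * d) x = group_of (n * d) (\<lambda>k. z (\<sigma> k div d))"
    unfolding \<sigma>(2) replicate_tuple_def by (rule group_of_cong) simp
  also have "\<dots> = repeat_mset d (group_of n z)"
    using group_of_permute[OF \<sigma>(1), of "\<lambda>j. z (j div d)"] by (simp add: group_of_replicate)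
  finally show "group_of (n * d) x = repeat_mset d (group_of n z)" .
qed

lemma set_mset_repeat_mset: "set_mset (repeat_mset d M) = (if d = 0 then {} else set_mset M)"
  by (auto simp flip: count_greater_zero_iff)

subsection \<open>The space of groups\<close>

lemma quotient_map_quotient_topology: "quotient_map X (quotient_topology X q) q"
proof -
  have Int: "S \<inter> T \<subseteq> q ` topspace X \<and> openin X {x \<in> topspace X. q x \<in> S \<inter> T}"
    if "S \<subseteq> q ` topspace X \<and> openin X {x \<in> topspace X. q x \<in> S}"
      "T \<subseteq> q ` topspace X \<and> openin X {x \<in> topspace X. q x \<in> T}" for S T
  proof -
    have "openin X ({x \<in> topspace X. q x \<in> S} \<inter> {x \<in> topspace X. q x \<in> T})"
      using that by blast
    moreover have "{x \<in> topspace X. q x \<in> S} \<inter> {x \<in> topspace X. q x \<in> T} =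
        {x \<in> topspace X. q x \<in> S \<inter> T}" by blast
    ultimately show ?thesis using that by auto
  qed
  have Union: "\<Union>K \<subseteq> q ` topspace X \<and> openin X {x \<in> topspace X. q x \<in> \<Union>K}"
    if "\<forall>U\<in>K. U \<subseteq> q ` topspace X \<and> openin X {x \<in> topspace X. q x \<in> U}" for K
  proof -
    have "openin X (\<Union>U\<in>K. {x \<in> topspace X. q x \<in> U})" using that by blast
    moreover have "(\<Union>U\<in>K. {x \<in> topspace X. q x \<in> U}) = {x \<in> topspace X. q x \<in> \<Union>K}" by blast
    ultimately show ?thesis using that by auto
  qed
  have "istopology (\<lambda>U. U \<subseteq> q ` topspace X \<and> openin X {x \<in> topspace X. q x \<in> U})"
    unfolding istopology_def using Int Union by simp
  then have opn: "openin (quotient_topology X q) U \<longleftrightarrow>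
      U \<subseteq> q ` topspace X \<and> openin X {x \<in> topspace X. q x \<in> U}" for U
    unfolding quotient_topology_def by (simp add: topology_inverse')
  have "{x \<in> topspace X. q x \<in> q ` topspace X} = topspace X" by blast
  then have "openin (quotient_topology X q) (q ` topspace X)"
    unfolding opn by simp
  then have "topspace (quotient_topology X q) = q ` topspace X"
    by (metis openin_subset openin_topspace opn subset_antisym)
  then show ?thesis
    unfolding quotient_map_def opn by auto
qed

lemma quotient_map_group_of:
  "quotient_map (product_topology (\<lambda>_. top_of_set I) {..<n}) (groups_top I n) (group_of n)"
  unfolding groups_top_def by (rule quotient_map_quotient_topology)

lemma topspace_groups_top: "topspace (groups_top I n) = {M. size M = n \<and> set_mset M \<subseteq> I}"
proof -
  have onto: "M \<in> group_of n ` (\<Pi>\<^sub>E k\<in>{..<n}. I)" if "size M = n" "set_mset M \<subseteq> I" for M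
  proof -
    obtain xs where xs: "mset xs = M" using ex_mset by blast
    then have len: "length xs = n" using that by auto
    have "group_of n (restrict ((!) xs) {..<n}) = mset (map ((!) xs) [0..<length xs])"
      unfolding group_of_eq_mset_map len by (intro arg_cong[where f = mset] map_cong) auto
    also have "\<dots> = M"
      using xs by (simp add: map_nth)
    finally have "group_of n (restrict ((!) xs) {..<n}) = M" .
    moreover have "restrict ((!) xs) {..<n} \<in> (\<Pi>\<^sub>E k\<in>{..<n}. I)"
      using that xs len by (auto simp: PiE_iff)
    ultimately show ?thesis by blast
  qed
  have into: "size (group_of n z) = n \<and> set_mset (group_of n z) \<subseteq> I"
    if "z \<in> (\<Pi>\<^sub>E k\<in>{..<n}. I)" for z
    using that by (auto simp: group_of_def)
  have "topspace (groups_top I n) = group_of n ` (\<Pi>\<^sub>E k\<in>{..<n}. I)"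
    using quotient_imp_surjective_map[OF quotient_map_group_of[of I n]] by simp
  also have "\<dots> = {M. size M = n \<and> set_mset M \<subseteq> I}"
    using onto into by fastforce
  finally show ?thesis .
qed

lemma compact_space_groups_top:
  assumes "compact I"
  shows "compact_space (groups_top I n)"
proof -
  have "compact_space (product_topology (\<lambda>_. top_of_set I) {..<n})"
    using assms by (auto simp: compact_space_product_topology intro: compact_space_subtopology)
  then have "compactin (groups_top I n) (group_of n ` topspace (product_topology (\<lambda>_. top_of_set I) {..<n}))"
    unfolding compact_space_def
    by (rule image_compactin[OF _ quotient_imp_continuous_map[OF quotient_map_group_of]])
  then show ?thesis
    unfolding compact_space_def quotient_imp_surjective_map[OF quotient_map_group_of] .
qed

lemma repeat_mset_in_topspace_groups_top:
  "M \<in> topspace (groups_top I n) \<Longrightarrow> repeat_mset d M \<in> topspace (groups_top I (n * d))"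
  by (auto simp: topspace_groups_top set_mset_repeat_mset)

lemma continuous_map_replicate_tuple:
  assumes "\<sigma> permutes {..<n * d}"
  shows "continuous_map (product_topology (\<lambda>_. top_of_set I) {..<n})
    (product_topology (\<lambda>_. top_of_set I) {..<n * d}) (replicate_tuple (n * d) d \<sigma>)"
  unfolding continuous_map_componentwise
proof (intro conjI ballI)
  show "replicate_tuple (n * d) d \<sigma> ` topspace (product_topology (\<lambda>_. top_of_set I) {..<n})
      \<subseteq> extensional {..<n * d}"
    unfolding replicate_tuple_def by auto
  fix k assume "k \<in> {..<n * d}"
  then have "\<sigma> k < n * d"
    using assms permutes_in_image by fastforce
  then have "\<sigma> k div d < n"
    by (rule less_mult_imp_div_less)
  then show "continuous_map (product_topology (\<lambda>_. top_of_set I) {..<n}) (top_of_set I)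
      (\<lambda>x. replicate_tuple (n * d) d \<sigma> x k)"
    unfolding replicate_tuple_def using \<open>k \<in> {..<n * d}\<close>
    by (simp, intro continuous_map_product_projection) auto
qed

lemma group_of_preimage_repeat_mset_image:
  assumes "A \<subseteq> topspace (groups_top I n)"
  defines "X k \<equiv> product_topology (\<lambda>_. top_of_set I) {..<k}"
  shows "{x \<in> topspace (X (n * d)). group_of (n * d) x \<in> repeat_mset d ` A} =
    (\<Union>\<sigma>\<in>{\<sigma>. \<sigma> permutes {..<n * d}}.
       replicate_tuple (n * d) d \<sigma> ` {z \<in> topspace (X n). group_of n z \<in> A})"
    (is "?L = (\<Union>\<sigma>\<in>_. _ ` ?C)")
proof (intro equalityI subsetI)
  have "A \<subseteq> group_of n ` topspace (X n)"
    using assms(1) quotient_imp_surjective_map[OF quotient_map_group_of[of I n]]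
    by (simp add: X_def)
  then have lift: "group_of (n * d) x \<in> repeat_mset d ` A \<longleftrightarrow>
      (\<exists>z\<in>?C. group_of (n * d) x = repeat_mset d (group_of n z))" for x
    by blast
  have ext: "x \<in> extensional {..<n * d}" if "x \<in> topspace (X (n * d))" for x
    using that by (simp add: X_def PiE_iff)
  {
    fix x assume x: "x \<in> ?L"
    then obtain z where "z \<in> ?C" "group_of (n * d) x = repeat_mset d (group_of n z)"
      using lift by blast
    moreover have "x \<in> extensional {..<n * d}" using ext x by blast
    ultimately show "x \<in> (\<Union>\<sigma>\<in>{\<sigma>. \<sigma> permutes {..<n * d}}. replicate_tuple (n * d) d \<sigma> ` ?C)"
      using group_of_eq_repeat_mset_iff by blast
  next
    fix x assume "x \<in> (\<Union>\<sigma>\<in>{\<sigma>. \<sigma> permutes {..<n * d}}. replicate_tuple (n * d) d \<sigma> ` ?C)"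
    then obtain \<sigma> z where \<sigma>: "\<sigma> permutes {..<n * d}" and "z \<in> ?C"
      and x: "x = replicate_tuple (n * d) d \<sigma> z"
      by blast
    then have "x \<in> topspace (X (n * d))"
      using continuous_map_image_subset_topspace[OF continuous_map_replicate_tuple[OF \<sigma>]]
      unfolding X_def by blast
    moreover have "group_of (n * d) x = repeat_mset d (group_of n z)"
      using group_of_eq_repeat_mset_iff[OF ext[OF calculation]] \<sigma> x by blast
    ultimately show "x \<in> ?L"
      using lift \<open>z \<in> ?C\<close> by blast
  }
qed

lemma closedin_repeat_mset_image:
  assumes "compact I" "closedin (groups_top I n) A"
  shows "closedin (groups_top I (n * d)) (repeat_mset d ` A)"
proof -
  define X where "X k = product_topology (\<lambda>_. top_of_set I) {..<k}" for k :: nat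
  define C where "C = {z \<in> topspace (X n). group_of n z \<in> A}"
  have "closedin (X n) C"
    using assms(2) quotient_map_group_of[of I n] unfolding C_def X_def quotient_map_closedin
    by (simp add: closedin_subset)
  moreover have "compact_space (X n)"
    using assms(1) by (auto simp: X_def compact_space_product_topology intro: compact_space_subtopology)
  ultimately have "compactin (X n) C"
    by (simp add: closedin_compact_space)
  then have "compactin (X (n * d)) (replicate_tuple (n * d) d \<sigma> ` C)" if "\<sigma> permutes {..<n * d}" for \<sigma>
    using image_compactin[OF _ continuous_map_replicate_tuple[OF that]] unfolding X_def by blast
  then have "compactin (X (n * d)) (\<Union>\<sigma>\<in>{\<sigma>. \<sigma> permutes {..<n * d}}. replicate_tuple (n * d) d \<sigma> ` C)"
    by (intro compactin_Union) (auto simp: finite_permutations)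
  moreover have "Hausdorff_space (X (n * d))"
    by (simp add: X_def Hausdorff_space_product_topology Hausdorff_space_subtopology)
  ultimately have "closedin (X (n * d)) (\<Union>\<sigma>\<in>{\<sigma>. \<sigma> permutes {..<n * d}}. replicate_tuple (n * d) d \<sigma> ` C)"
    by (rule compactin_imp_closedin[rotated])
  moreover have "{x \<in> topspace (X (n * d)). group_of (n * d) x \<in> repeat_mset d ` A} =
      (\<Union>\<sigma>\<in>{\<sigma>. \<sigma> permutes {..<n * d}}. replicate_tuple (n * d) d \<sigma> ` C)"
    unfolding C_def X_def by (rule group_of_preimage_repeat_mset_image[OF closedin_subset[OF assms(2)]])
  ultimately have "closedin (X (n * d)) {x \<in> topspace (X (n * d)). group_of (n * d) x \<in> repeat_mset d ` A}"
    by simp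
  moreover have "repeat_mset d ` A \<subseteq> topspace (groups_top I (n * d))"
    using closedin_subset[OF assms(2)] repeat_mset_in_topspace_groups_top by blast
  ultimately show ?thesis
    using quotient_map_group_of[of I "n * d"] unfolding X_def quotient_map_closedin by blast
qed

subsection \<open>The sets \<open>K\<^sub>n\<close> and the maps \<open>P\<^sub>n\<close>\<close>

lemma count_P_map: "count (P_map N n M) i = count M i div (fact N div n)"
proof -
  have "count (P_map N n M) i = (\<Sum>j\<in>set_mset M. if i = j then count M j div (fact N div n) else 0)"
    unfolding P_map_def count_sum by (intro sum.cong) auto
  also have "\<dots> = count M i div (fact N div n)"
    by (cases "i \<in># M") (auto simp: not_in_iff)
  finally show ?thesis .
qed

lemma in_K_repeat_mset: "in_K N n (repeat_mset (fact N div n) M)"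
  by (simp add: in_K_def)

lemma P_map_repeat_mset: "0 < fact N div n \<Longrightarrow> P_map N n (repeat_mset (fact N div n) M) = M"
  by (simp add: multiset_eq_iff count_P_map)

lemma repeat_mset_P_map: "in_K N n M \<Longrightarrow> repeat_mset (fact N div n) (P_map N n M) = M"
  by (auto simp: multiset_eq_iff count_P_map in_K_def)

lemma mult_fact_div:
  assumes "1 \<le> n" "n \<le> N"
  shows "n * (fact N div n) = fact N"
  using assms dvd_fact by (metis dvd_mult_div_cancel)

lemma fact_div_pos:
  assumes "1 \<le> n" "n \<le> N"
  shows "0 < fact N div n"
  using assms fact_ge_self[of N] by (simp add: div_greater_zero_iff)

lemma P_map_in_topspace_groups_top:
  assumes "1 \<le> n" "n \<le> N" "M \<in> topspace (groups_top I (fact N))" "in_K N n M"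
  shows "P_map N n M \<in> topspace (groups_top I n)"
proof -
  define d where "d = fact N div n"
  have M: "repeat_mset d (P_map N n M) = M"
    unfolding d_def by (rule repeat_mset_P_map[OF assms(4)])
  have "d * size (P_map N n M) = d * n"
    using arg_cong[OF M, of size] assms(3) mult_fact_div[OF assms(1,2)]
    by (simp add: topspace_groups_top d_def mult.commute)
  then have "size (P_map N n M) = n"
    using fact_div_pos[OF assms(1,2)] by (simp add: d_def)
  moreover have "set_mset (P_map N n M) \<subseteq> set_mset M"
    using M fact_div_pos[OF assms(1,2)] set_mset_repeat_mset[of d "P_map N n M"]
    by (simp add: d_def)
  ultimately show ?thesis
    using assms(3) by (auto simp: topspace_groups_top)
qed

lemma s_hat_n_nonneg:
  assumes "1 \<le> n" "n \<le> N" "\<forall>M\<in>topspace (groups_top I n). 0 \<le> s M"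
    and "M \<in> topspace (groups_top I (fact N))"
  shows "0 \<le> s_hat_n s N n M"
  using assms P_map_in_topspace_groups_top[OF assms(1,2,4)] by (simp add: s_hat_n_def)

lemma superlevel_s_hat_n_eq_repeat_mset_image:
  assumes "1 \<le> n" "n \<le> N" "0 < t"
  shows "{M \<in> topspace (groups_top I (fact N)). t \<le> s_hat_n s N n M} =
    repeat_mset (fact N div n) ` {M \<in> topspace (groups_top I n). t \<le> s M}"
proof (intro equalityI subsetI)
  fix M assume M: "M \<in> {M \<in> topspace (groups_top I (fact N)). t \<le> s_hat_n s N n M}"
  then have K: "in_K N n M"
    using assms(3) by (auto simp: s_hat_n_def split: if_splits)
  then have "P_map N n M \<in> {M \<in> topspace (groups_top I n). t \<le> s M}"
    using M P_map_in_topspace_groups_top[OF assms(1,2)] unfolding s_hat_n_def by auto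
  then show "M \<in> repeat_mset (fact N div n) ` {M \<in> topspace (groups_top I n). t \<le> s M}"
    using repeat_mset_P_map[OF K] by (metis image_eqI)
next
  fix M assume "M \<in> repeat_mset (fact N div n) ` {M \<in> topspace (groups_top I n). t \<le> s M}"
  then obtain M' where M': "M' \<in> topspace (groups_top I n)" "t \<le> s M'"
    and M: "M = repeat_mset (fact N div n) M'"
    by blast
  have "M \<in> topspace (groups_top I (fact N))"
    using repeat_mset_in_topspace_groups_top[OF M'(1), of "fact N div n"] M mult_fact_div[OF assms(1,2)]
    by simp
  moreover have "in_K N n M" "P_map N n M = M'"
    using M fact_div_pos[OF assms(1,2)] by (simp_all add: in_K_repeat_mset P_map_repeat_mset)
  ultimately show "M \<in> {M \<in> topspace (groups_top I (fact N)). t \<le> s_hat_n s N n M}"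
    using M'(2) unfolding s_hat_n_def by auto
qed

lemma usc_map_s_hat_n:
  assumes "compact I" "1 \<le> n" "n \<le> N"
    and cont: "continuous_map (groups_top I n) euclideanreal s"
    and nonneg: "\<forall>M\<in>topspace (groups_top I n). 0 \<le> s M"
  shows "usc_map (groups_top I (fact N)) (s_hat_n s N n)"
  unfolding usc_map_iff_closedin
proof
  fix t :: real
  show "closedin (groups_top I (fact N)) {M \<in> topspace (groups_top I (fact N)). t \<le> s_hat_n s N n M}"
  proof (cases "t \<le> 0")
    case True
    then have "{M \<in> topspace (groups_top I (fact N)). t \<le> s_hat_n s N n M} =
        topspace (groups_top I (fact N))"
      using s_hat_n_nonneg[OF assms(2,3) nonneg] by force
    then show ?thesis by simp
  next
    case False
    have "closedin (groups_top I n) {M \<in> topspace (groups_top I n). s M \<in> {t..}}"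
      using cont by (rule closedin_continuous_map_preimage) simp
    then have "closedin (groups_top I (n * (fact N div n)))
        (repeat_mset (fact N div n) ` {M \<in> topspace (groups_top I n). t \<le> s M})"
      using closedin_repeat_mset_image[OF assms(1)] by simp
    moreover have "0 < t" using False by simp
    ultimately show ?thesis
      by (simp add: superlevel_s_hat_n_eq_repeat_mset_image[OF assms(2,3)] mult_fact_div[OF assms(2,3)])
  qed
qed

theorem lemma1:
  fixes I :: "'a::metric_space set"
    and \<mu> :: "'a measure"
    and N N' :: nat
    and s :: "'a multiset \<Rightarrow> real"
  assumes "compact I"
    and "sets \<mu> = sets (restrict_space borel I)"
    and "finite_measure \<mu>"
    and "2 \<le> N" and "1 \<le> N'" and "N' \<le> N"
    and s_nonneg: "\<forall>n\<in>{N'..N}. \<forall>M\<in>topspace (groups_top I n). 0 \<le> s M"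
    and A1: "\<forall>n\<in>{N'..N}. continuous_map (groups_top I n) euclideanreal s"
    and A2: "\<forall>n\<in>{N'..N}. \<exists>a :: 'a \<Rightarrow> real. lsc_map (top_of_set I) a \<and>
               (\<forall>M\<in>topspace (groups_top I n). s M \<le> (\<Sum>i\<in>#M. a i))"
  shows "usc_map (groups_top I (fact N)) (s_hat s N' N) \<and>
         (\<exists>a_hat :: 'a \<Rightarrow> real. lsc_map (top_of_set I) a_hat \<and> integrable \<mu> a_hat \<and>
            (\<forall>M\<in>topspace (groups_top I (fact N)). s_hat s N' N M \<le> (\<Sum>i\<in>#M. a_hat i)))"
proof -
  have usc: "usc_map (groups_top I (fact N)) (s_hat s N' N)"
    unfolding s_hat_def[abs_def] using assms(5,6)
    by (intro usc_map_Max usc_map_cmult usc_map_s_hat_n[OF assms(1)]) (auto simp: A1 s_nonneg)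
  obtain B where B: "\<And>M. M \<in> topspace (groups_top I (fact N)) \<Longrightarrow> s_hat s N' N M \<le> B"
    using usc_map_bounded_above[OF compact_space_groups_top[OF assms(1)] usc] by blast
  have "s_hat s N' N M \<le> (\<Sum>i\<in>#M. B / fact N)" if "M \<in> topspace (groups_top I (fact N))" for M
    using B[OF that] that by (simp add: topspace_groups_top)
  moreover have "integrable \<mu> (\<lambda>_. B / fact N)"
    using assms(3) finite_measure.integrable_const by blast
  ultimately show ?thesis
    using usc lsc_map_const by blast
qed

end
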